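(* Let $(G,\omega,\mu)$ be an infinite, connected weighted graph, and let $d$ be a pseudo metric on $G$ which is intrinsic, is also $1$-intrinsic with bound $C_0>0$, has finite jump size $s$, and has finite balls. Let $V:G\to\mathbb{R}$ satisfy $c_0:=\inf_G V>0$. Let $u$ be a solution of $\Delta u - Vu=0$ in $G$. Let $p\ge1$ and $\alpha>0$ be such that $$C_0\,\alpha\, e^{s\alpha} < c_0 p.$$ Fix $x_0\in G$ and suppose $u\in\ell^p_{\varphi_\alpha}(G,\mu)$, where $\varphi_\alpha(x)=e^{-\alpha d(x,x_0)}$. Then $u(x)=0$ for all $x\in G$.
   Context: A weighted graph $(G,\omega,\mu)$: $G$ countable, $\mu:G\to(0,\infty)$, $\omega:G\times G\to[0,\infty)$ symmetric with $\omega(x,x)=0$ and $\sum_y\omega(x,y)<\infty$; $x\sim y$ iff $\omega(x,y)>0$; connected means any two vertices are joined by a finite path. Laplacian $\Delta f(x)=\frac{1}{\mu(x)}\sum_{y}[f(y)-f(x)]\omega(x,y)$. A pseudo metric $d$ is a symmetric nonnegative function with $d(x,x)=0$ satisfying the triangle inequality. Jump size $s:=\sup\{d(x,y):\omega(x,y)>0\}$. For $q\ge1$, $C_0>0$, $d$ is $q$-intrinsic with bound $C_0$ if $\frac{1}{\mu(x)}\sum_y\omega(x,y)d^q(x,y)\le C_0$ for all $x$; intrinsic means $2$-intrinsic with bound $1$. $B_r(x)=\{y:d(y,x)<r\}$; finite balls means each $B_r(x)$ is finite. For $\varphi:G\to(0,\infty)$, $\ell^p_\varphi(G,\mu)=\{u:\sum_x|u(x)|^p\varphi(x)\mu(x)<\infty\}$.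 *)

theory Defs
  imports "HOL-Analysis.Analysis"
begin

text \<open>Vertex set G is the whole (countable) type 'a.\<close>

definition weighted_graph :: "('a \<Rightarrow> 'a \<Rightarrow> real) \<Rightarrow> ('a \<Rightarrow> real) \<Rightarrow> bool" where
  "weighted_graph \<omega> \<mu> \<longleftrightarrow>
     (\<forall>x. \<mu> x > 0) \<and> (\<forall>x y. \<omega> x y \<ge> 0) \<and> (\<forall>x y. \<omega> x y = \<omega> y x) \<and>
     (\<forall>x. \<omega> x x = 0) \<and> (\<forall>x. (\<lambda>y. \<omega> x y) summable_on UNIV)"

definition adjacent :: "('a \<Rightarrow> 'a \<Rightarrow> real) \<Rightarrow> 'a \<Rightarrow> 'a \<Rightarrow> bool" where
  "adjacent \<omega> x y \<longleftrightarrow> \<omega> x y > 0"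

definition graph_connected :: "('a \<Rightarrow> 'a \<Rightarrow> real) \<Rightarrow> bool" where
  "graph_connected \<omega> \<longleftrightarrow> (\<forall>x y. (adjacent \<omega>)\<^sup>*\<^sup>* x y)"

definition laplacian :: "('a \<Rightarrow> 'a \<Rightarrow> real) \<Rightarrow> ('a \<Rightarrow> real) \<Rightarrow> ('a \<Rightarrow> real) \<Rightarrow> 'a \<Rightarrow> real" where
  "laplacian \<omega> \<mu> f x = (1 / \<mu> x) * (\<Sum>\<^sub>\<infinity>y. (f y - f x) * \<omega> x y)"

definition in_lap_domain :: "('a \<Rightarrow> 'a \<Rightarrow> real) \<Rightarrow> ('a \<Rightarrow> real) \<Rightarrow> bool" where
  "in_lap_domain \<omega> f \<longleftrightarrow> (\<forall>x. (\<lambda>y. (f y - f x) * \<omega> x y) summable_on UNIV)"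

definition schroedinger_solution ::
  "('a \<Rightarrow> 'a \<Rightarrow> real) \<Rightarrow> ('a \<Rightarrow> real) \<Rightarrow> ('a \<Rightarrow> real) \<Rightarrow> ('a \<Rightarrow> real) \<Rightarrow> bool" where
  "schroedinger_solution \<omega> \<mu> V u \<longleftrightarrow>
     in_lap_domain \<omega> u \<and> (\<forall>x. laplacian \<omega> \<mu> u x - V x * u x = 0)"

definition pseudo_metric :: "('a \<Rightarrow> 'a \<Rightarrow> real) \<Rightarrow> bool" where
  "pseudo_metric d \<longleftrightarrow> (\<forall>x y. d x y \<ge> 0) \<and> (\<forall>x y. d x y = d y x) \<and> (\<forall>x. d x x = 0) \<and>
     (\<forall>x y z. d x z \<le> d x y + d y z)"

definition q_intrinsic :: "('a \<Rightarrow> 'a \<Rightarrow> real) \<Rightarrow> ('a \<Rightarrow> real) \<Rightarrow> ('a \<Rightarrow> 'a \<Rightarrow> real) \<Rightarrow> real \<Rightarrow> real \<Rightarrow> bool" where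
  "q_intrinsic \<omega> \<mu> d q C0 \<longleftrightarrow>
     (\<forall>x. (\<lambda>y. \<omega> x y * d x y powr q) summable_on UNIV \<and>
          (1 / \<mu> x) * (\<Sum>\<^sub>\<infinity>y. \<omega> x y * d x y powr q) \<le> C0)"

definition intrinsic :: "('a \<Rightarrow> 'a \<Rightarrow> real) \<Rightarrow> ('a \<Rightarrow> real) \<Rightarrow> ('a \<Rightarrow> 'a \<Rightarrow> real) \<Rightarrow> bool" where
  "intrinsic \<omega> \<mu> d \<longleftrightarrow> q_intrinsic \<omega> \<mu> d 2 1"

definition jump_set :: "('a \<Rightarrow> 'a \<Rightarrow> real) \<Rightarrow> ('a \<Rightarrow> 'a \<Rightarrow> real) \<Rightarrow> real set" where
  "jump_set \<omega> d = {d x y | x y. \<omega> x y > 0}"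

definition jump_size :: "('a \<Rightarrow> 'a \<Rightarrow> real) \<Rightarrow> ('a \<Rightarrow> 'a \<Rightarrow> real) \<Rightarrow> real" where
  "jump_size \<omega> d = Sup (jump_set \<omega> d)"

definition finite_balls :: "('a \<Rightarrow> 'a \<Rightarrow> real) \<Rightarrow> bool" where
  "finite_balls d \<longleftrightarrow> (\<forall>x r. finite {y. d y x < r})"

definition weighted_lp :: "real \<Rightarrow> ('a \<Rightarrow> real) \<Rightarrow> ('a \<Rightarrow> real) \<Rightarrow> ('a \<Rightarrow> real) set" where
  "weighted_lp p \<phi> \<mu> = {u. (\<lambda>x. \<bar>u x\<bar> powr p * \<phi> x * \<mu> x) summable_on UNIV}"

end

theory Submission
  imports Defs
begin

text \<open>
  Kato's inequality turns \<open>\<Delta>u = V u\<close> into \<open>\<Delta>|u|^p \<ge> p c0 |u|^p\<close>. Test this against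
  \<open>\<psi>\<^sub>R = e^(-\<alpha> d(.,x0)) \<chi>\<^sub>R\<close>, where \<open>\<chi>\<^sub>R\<close> is a \<open>1/R\<close>-Lipschitz cutoff equal to 1 on
  \<open>B\<^sub>R(x0)\<close> and vanishing outside \<open>B\<^sub>2\<^sub>R(x0)\<close>, and move the Laplacian onto \<open>\<psi>\<^sub>R\<close> by Green's
  formula. Since jumps are at most \<open>s\<close>, the exponential weight changes along an edge by a factor
  at most \<open>1 + a d\<close> with \<open>a = \<alpha> e^(s\<alpha>)\<close>, so the 1- and 2-intrinsic bounds give
  \<open>\<Delta>\<psi>\<^sub>R \<le> C0 a \<psi>\<^sub>R + (C0 + a) e^(-\<alpha> d(.,x0)) / R\<close>. Hence
  \<open>(c0 p - C0 a) \<Sum> |u|^p \<psi>\<^sub>R \<mu> \<le> (C0 + a) \<parallel>u\<parallel>^p / R\<close>, and \<open>R \<rightarrow> \<infinity>\<close> forces \<open>u = 0\<close>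
  because \<open>c0 p > C0 a\<close>.
\<close>

lemma has_sum_diff:
  fixes f g :: "'a \<Rightarrow> 'b::topological_ab_group_add"
  assumes "(f has_sum a) A" and "(g has_sum b) A"
  shows "((\<lambda>x. f x - g x) has_sum (a - b)) A"
proof -
  have "((\<lambda>x. - g x) has_sum - b) A"
    using assms(2) by (simp add: has_sum_uminus)
  from has_sum_add[OF assms(1) this] show ?thesis by simp
qed

lemma summable_on_diff:
  fixes f g :: "'a \<Rightarrow> 'b::topological_ab_group_add"
  assumes "f summable_on A" and "g summable_on A"
  shows "(\<lambda>x. f x - g x) summable_on A"
  using assms has_sum_diff unfolding summable_on_def by blast

lemma has_sum_sum:
  fixes f :: "'i \<Rightarrow> 'a \<Rightarrow> 'b::topological_comm_monoid_add"
  assumes "finite I" and "\<And>i. i \<in> I \<Longrightarrow> (f i has_sum s i) A"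
  shows "((\<lambda>x. \<Sum>i\<in>I. f i x) has_sum (\<Sum>i\<in>I. s i)) A"
  using assms by (induction I rule: finite_induct) (auto intro: has_sum_add)

lemma abs_powr_tangent_le:
  fixes p a b :: real
  assumes "p \<ge> 1"
  shows "p * sgn a * \<bar>a\<bar> powr (p - 1) * (b - a) \<le> \<bar>b\<bar> powr p - \<bar>a\<bar> powr p"
proof (cases "a = 0")
  case False
  let ?c = "\<bar>a\<bar>" and ?t = "\<bar>b\<bar>"
  have c: "?c > 0" using False by simp
  have tangent: "p * ?c powr (p - 1) * (?t - ?c) \<le> ?t powr p - ?c powr p"
  proof (cases "b = 0")
    case True
    have "?c powr p = ?c powr (p - 1) * ?c" using c by (simp add: powr_diff)
    then show ?thesis using True assms c by (simp add: mult_le_cancel_right1)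
  next
    case False
    show ?thesis
      by (rule convex_on_imp_above_tangent[where A = "{0<..}" and f = "\<lambda>x. x powr p"])
         (use assms c False in \<open>auto intro!: powr_convex derivative_eq_intros simp: interior_open\<close>)
  qed
  have "sgn a * (b - a) \<le> ?t - ?c"
    by (cases "a > 0") (auto simp: sgn_if abs_if)
  then have "p * ?c powr (p - 1) * (sgn a * (b - a)) \<le> p * ?c powr (p - 1) * (?t - ?c)"
    using assms by (intro mult_left_mono) auto
  then show ?thesis using tangent by (simp add: mult_ac)
qed simp

lemma sgn_mult_abs_powr: "sgn a * \<bar>a\<bar> powr (p - 1) * a = \<bar>a\<bar> powr p" for a p :: real
proof (cases "a = 0")
  case False
  have "sgn a * \<bar>a\<bar> powr (p - 1) * a = \<bar>a\<bar> powr (p - 1) * (a * sgn a)"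
    by (simp only: mult_ac)
  also have "\<dots> = \<bar>a\<bar> powr p"
    using False by (simp add: abs_sgn[symmetric] powr_diff)
  finally show ?thesis .
qed simp

lemma exp_le_1_plus_mult_exp: "exp t \<le> 1 + t * exp t" for t :: real
proof -
  have "(1 - t) * exp t \<le> exp (- t) * exp t"
    using exp_ge_add_one_self[of "- t"] by (intro mult_right_mono) auto
  then show ?thesis by (simp add: exp_minus field_simps)
qed

lemma nonpos_if_eventually_le_div:
  fixes c K :: real
  assumes "eventually (\<lambda>R. c \<le> K / R) at_top"
  shows "c \<le> 0"
  using tendsto_lowerbound[OF tendsto_divide_0[OF tendsto_const
        filterlim_at_top_imp_at_infinity[OF filterlim_ident]] assms]
  by simp

lemma weighted_graphD:
  assumes "weighted_graph \<omega> \<mu>"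
  shows "0 < \<mu> x" and "0 \<le> \<omega> x y" and "\<omega> x y = \<omega> y x" and "(\<lambda>y. \<omega> x y) summable_on UNIV"
  using assms unfolding weighted_graph_def by blast+

lemma pseudo_metricD:
  assumes "pseudo_metric d"
  shows "0 \<le> d x y" and "d x y = d y x" and "d x z \<le> d x y + d y z"
  using assms unfolding pseudo_metric_def by auto

lemma intrinsicD:
  assumes "intrinsic \<omega> \<mu> d" and "pseudo_metric d" and "weighted_graph \<omega> \<mu>"
  shows "(\<lambda>y. \<omega> x y * (d x y)\<^sup>2) summable_on UNIV" and "(\<Sum>\<^sub>\<infinity>y. \<omega> x y * (d x y)\<^sup>2) \<le> \<mu> x"
proof -
  have "\<And>x y. d x y powr 2 = (d x y)\<^sup>2"
    using pseudo_metricD(1)[OF assms(2)] by simp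
  then have "(\<lambda>y. \<omega> x y * (d x y)\<^sup>2) summable_on UNIV \<and> (\<Sum>\<^sub>\<infinity>y. \<omega> x y * (d x y)\<^sup>2) / \<mu> x \<le> 1"
    using assms(1) unfolding intrinsic_def q_intrinsic_def by simp
  then show "(\<lambda>y. \<omega> x y * (d x y)\<^sup>2) summable_on UNIV" "(\<Sum>\<^sub>\<infinity>y. \<omega> x y * (d x y)\<^sup>2) \<le> \<mu> x"
    using weighted_graphD(1)[OF assms(3), of x] by (auto simp: pos_divide_le_eq)
qed

lemma q_intrinsic_1D:
  assumes "q_intrinsic \<omega> \<mu> d 1 C0" and "pseudo_metric d" and "weighted_graph \<omega> \<mu>"
  shows "(\<lambda>y. \<omega> x y * d x y) summable_on UNIV" and "(\<Sum>\<^sub>\<infinity>y. \<omega> x y * d x y) \<le> C0 * \<mu> x"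
proof -
  have "\<And>x y. \<bar>d x y\<bar> = d x y"
    using pseudo_metricD(1)[OF assms(2)] by simp
  then have "(\<lambda>y. \<omega> x y * d x y) summable_on UNIV \<and> (\<Sum>\<^sub>\<infinity>y. \<omega> x y * d x y) / \<mu> x \<le> C0"
    using assms(1) unfolding q_intrinsic_def by simp
  then show "(\<lambda>y. \<omega> x y * d x y) summable_on UNIV" "(\<Sum>\<^sub>\<infinity>y. \<omega> x y * d x y) \<le> C0 * \<mu> x"
    using weighted_graphD(1)[OF assms(3), of x] by (auto simp: pos_divide_le_eq)
qed

lemma jump_size_ge:
  assumes "bdd_above (jump_set \<omega> d)" and "0 < \<omega> x y"
  shows "d x y \<le> jump_size \<omega> d"
  unfolding jump_size_def using assms by (intro cSup_upper) (auto simp: jump_set_def)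

lemma weight_le_measure_if_far:
  assumes "weighted_graph \<omega> \<mu>" and "pseudo_metric d" and "intrinsic \<omega> \<mu> d" and "1 \<le> d x y"
  shows "\<omega> x y \<le> \<mu> x"
proof -
  have "\<omega> x y \<le> \<omega> x y * (d x y)\<^sup>2"
    using mult_left_mono[OF one_le_power[OF assms(4)] weighted_graphD(2)[OF assms(1)]] by simp
  also have "\<dots> = (\<Sum>z\<in>{y}. \<omega> x z * (d x z)\<^sup>2)" by simp
  also have "\<dots> \<le> (\<Sum>\<^sub>\<infinity>z. \<omega> x z * (d x z)\<^sup>2)"
    using intrinsicD(1)[OF assms(3,2,1)] weighted_graphD(2)[OF assms(1)]
    by (intro finite_sum_le_infsum) auto
  also have "\<dots> \<le> \<mu> x" by (rule intrinsicD(2)[OF assms(3,2,1)])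
  finally show ?thesis .
qed

lemma in_lap_domain_iff:
  assumes "weighted_graph \<omega> \<mu>"
  shows "in_lap_domain \<omega> f \<longleftrightarrow> (\<forall>x. (\<lambda>y. f y * \<omega> x y) summable_on UNIV)"
proof -
  have "(\<lambda>y. (f y - f x) * \<omega> x y) summable_on UNIV \<longleftrightarrow> (\<lambda>y. f y * \<omega> x y) summable_on UNIV" for x
  proof -
    have deg: "(\<lambda>y. f x * \<omega> x y) summable_on UNIV"
      using weighted_graphD(4)[OF assms] by (rule summable_on_cmult_right)
    show ?thesis
      using summable_on_add[OF _ deg, of "\<lambda>y. (f y - f x) * \<omega> x y"] summable_on_diff[OF _ deg]
      by (auto simp: algebra_simps)
  qed
  then show ?thesis unfolding in_lap_domain_def by blast
qed

lemma in_lap_domain_if_bounded: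
  fixes f :: "'a \<Rightarrow> real"
  assumes wg: "weighted_graph \<omega> \<mu>" and "\<And>x. 0 \<le> f x" and "\<And>x. f x \<le> B"
  shows "in_lap_domain \<omega> f"
  unfolding in_lap_domain_iff[OF wg]
proof
  fix x
  show "(\<lambda>y. f y * \<omega> x y) summable_on UNIV"
  proof (rule summable_on_comparison_test)
    show "(\<lambda>y. B * \<omega> x y) summable_on UNIV"
      by (rule summable_on_cmult_right[OF weighted_graphD(4)[OF wg]])
    show "f y * \<omega> x y \<le> B * \<omega> x y" and "0 \<le> f y * \<omega> x y" for y
      using assms(2,3)[of y] weighted_graphD(2)[OF wg, of x y] by (simp_all add: mult_right_mono)
  qed
qed

lemma laplacian_mult_measure_eq:
  assumes "weighted_graph \<omega> \<mu>" and "(\<lambda>y. f y * \<omega> x y) summable_on UNIV"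
  shows "laplacian \<omega> \<mu> f x * \<mu> x = (\<Sum>\<^sub>\<infinity>y. f y * \<omega> x y) - f x * (\<Sum>\<^sub>\<infinity>y. \<omega> x y)"
proof -
  have "((\<lambda>y. f y * \<omega> x y - f x * \<omega> x y) has_sum
      (\<Sum>\<^sub>\<infinity>y. f y * \<omega> x y) - f x * (\<Sum>\<^sub>\<infinity>y. \<omega> x y)) UNIV"
    using assms(2) weighted_graphD(4)[OF assms(1)]
    by (intro has_sum_diff has_sum_cmult_right) auto
  then have "(\<Sum>\<^sub>\<infinity>y. (f y - f x) * \<omega> x y) = (\<Sum>\<^sub>\<infinity>y. f y * \<omega> x y) - f x * (\<Sum>\<^sub>\<infinity>y. \<omega> x y)"
    by (simp add: infsumI left_diff_distrib)
  then show ?thesis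
    using weighted_graphD(1)[OF assms(1), of x] by (simp add: laplacian_def)
qed

lemma kato_inequality:
  fixes u :: "'a \<Rightarrow> real"
  assumes wg: "weighted_graph \<omega> \<mu>" and "p \<ge> 1"
    and "in_lap_domain \<omega> u" and "in_lap_domain \<omega> (\<lambda>y. \<bar>u y\<bar> powr p)"
  shows "p * sgn (u x) * \<bar>u x\<bar> powr (p - 1) * laplacian \<omega> \<mu> u x
    \<le> laplacian \<omega> \<mu> (\<lambda>y. \<bar>u y\<bar> powr p) x"
proof -
  define k where "k = p * sgn (u x) * \<bar>u x\<bar> powr (p - 1)"
  have "(\<Sum>\<^sub>\<infinity>y. k * ((u y - u x) * \<omega> x y)) \<le> (\<Sum>\<^sub>\<infinity>y. (\<bar>u y\<bar> powr p - \<bar>u x\<bar> powr p) * \<omega> x y)"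
  proof (rule infsum_mono)
    show "(\<lambda>y. k * ((u y - u x) * \<omega> x y)) summable_on UNIV"
      using assms(3) unfolding in_lap_domain_def by (simp add: summable_on_cmult_right)
    show "(\<lambda>y. (\<bar>u y\<bar> powr p - \<bar>u x\<bar> powr p) * \<omega> x y) summable_on UNIV"
      using assms(4) unfolding in_lap_domain_def by blast
    show "k * ((u y - u x) * \<omega> x y) \<le> (\<bar>u y\<bar> powr p - \<bar>u x\<bar> powr p) * \<omega> x y" for y
      using mult_right_mono[OF abs_powr_tangent_le[OF assms(2), of "u x" "u y"] weighted_graphD(2)[OF wg, of x y]]
      unfolding k_def by (simp add: mult_ac)
  qed
  then show ?thesis
    using weighted_graphD(1)[OF wg, of x]
    unfolding k_def[symmetric] laplacian_def infsum_cmult_right'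
    by (simp add: divide_right_mono mult_ac)
qed

lemma green_formula_finite_support:
  fixes f \<psi> :: "'a \<Rightarrow> real"
  assumes wg: "weighted_graph \<omega> \<mu>" and dom: "in_lap_domain \<omega> f"
    and S: "finite S" and supp: "\<And>x. x \<notin> S \<Longrightarrow> \<psi> x = 0"
  shows "((\<lambda>y. f y * laplacian \<omega> \<mu> \<psi> y * \<mu> y) has_sum
    (\<Sum>x\<in>S. \<psi> x * laplacian \<omega> \<mu> f x * \<mu> x)) UNIV"
proof -
  define deg where "deg x = (\<Sum>\<^sub>\<infinity>y. \<omega> x y)" for x
  have f_sum: "(\<lambda>y. f y * \<omega> x y) summable_on UNIV" for x
    using dom in_lap_domain_iff[OF wg] by blast
  have \<psi>_sum: "((\<lambda>x. \<psi> x * \<omega> y x) has_sum (\<Sum>x\<in>S. \<psi> x * \<omega> y x)) UNIV" for y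
    by (rule has_sum_finite_neutralI[OF S]) (auto simp: supp)
  have lap_\<psi>: "f y * laplacian \<omega> \<mu> \<psi> y * \<mu> y
      = f y * (\<Sum>x\<in>S. \<psi> x * \<omega> y x) - f y * (\<psi> y * deg y)" for y
    using laplacian_mult_measure_eq[OF wg has_sum_imp_summable[OF \<psi>_sum]] \<psi>_sum[THEN infsumI]
    unfolding deg_def by (simp add: mult.assoc right_diff_distrib)
  have lap_f: "\<psi> x * laplacian \<omega> \<mu> f x * \<mu> x
      = \<psi> x * (\<Sum>\<^sub>\<infinity>y. f y * \<omega> x y) - f x * (\<psi> x * deg x)" for x
    using laplacian_mult_measure_eq[OF wg f_sum] unfolding deg_def
    by (simp add: mult.assoc right_diff_distrib mult.left_commute)
  have "((\<lambda>y. \<Sum>x\<in>S. \<psi> x * (f y * \<omega> x y)) has_sum (\<Sum>x\<in>S. \<psi> x * (\<Sum>\<^sub>\<infinity>y. f y * \<omega> x y))) UNIV"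
    using f_sum by (intro has_sum_sum[OF S] has_sum_cmult_right) auto
  then have edges: "((\<lambda>y. f y * (\<Sum>x\<in>S. \<psi> x * \<omega> y x)) has_sum
      (\<Sum>x\<in>S. \<psi> x * (\<Sum>\<^sub>\<infinity>y. f y * \<omega> x y))) UNIV"
    using weighted_graphD(3)[OF wg] by (simp add: sum_distrib_left mult_ac)
  have diagonal: "((\<lambda>y. f y * (\<psi> y * deg y)) has_sum (\<Sum>x\<in>S. f x * (\<psi> x * deg x))) UNIV"
    by (rule has_sum_finite_neutralI[OF S]) (auto simp: supp)
  show ?thesis
    using has_sum_diff[OF edges diagonal] by (simp add: lap_\<psi> lap_f sum_subtractf)
qed

lemma energy_estimate_finite_support:
  fixes u V \<psi> g :: "'a \<Rightarrow> real"
  assumes wg: "weighted_graph \<omega> \<mu>" and sol: "schroedinger_solution \<omega> \<mu> V u"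
    and V: "\<And>x. c0 \<le> V x" and p: "p \<ge> 1"
    and dom: "in_lap_domain \<omega> (\<lambda>x. \<bar>u x\<bar> powr p)"
    and S: "finite S" and supp: "\<And>x. x \<notin> S \<Longrightarrow> \<psi> x = 0" and \<psi>_nonneg: "\<And>x. 0 \<le> \<psi> x"
    and lap_\<psi>: "\<And>y. laplacian \<omega> \<mu> \<psi> y \<le> b * \<psi> y + g y"
    and g_sum: "(\<lambda>y. \<bar>u y\<bar> powr p * g y * \<mu> y) summable_on UNIV"
  shows "(p * c0 - b) * (\<Sum>x\<in>S. \<bar>u x\<bar> powr p * \<psi> x * \<mu> x)
    \<le> (\<Sum>\<^sub>\<infinity>y. \<bar>u y\<bar> powr p * g y * \<mu> y)"
proof -
  define w where "w x = \<bar>u x\<bar> powr p" for x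
  define T where "T = (\<Sum>x\<in>S. w x * \<psi> x * \<mu> x)"
  have \<mu>: "0 < \<mu> x" for x by (rule weighted_graphD(1)[OF wg])
  have kato: "p * c0 * w x \<le> laplacian \<omega> \<mu> w x" for x
  proof -
    have "p * c0 * w x \<le> p * V x * w x"
      using V[of x] p unfolding w_def by (intro mult_right_mono mult_left_mono) auto
    also have "\<dots> = p * sgn (u x) * \<bar>u x\<bar> powr (p - 1) * (V x * u x)"
      using sgn_mult_abs_powr[of "u x" p] unfolding w_def by (simp only: mult_ac)
    also have "V x * u x = laplacian \<omega> \<mu> u x"
      using sol unfolding schroedinger_solution_def by simp
    also have "p * sgn (u x) * \<bar>u x\<bar> powr (p - 1) * laplacian \<omega> \<mu> u x \<le> laplacian \<omega> \<mu> w x"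
      using kato_inequality[OF wg p _ dom, of x] sol
      unfolding schroedinger_solution_def w_def[abs_def] by blast
    finally show ?thesis .
  qed
  have T_sum: "((\<lambda>y. w y * \<psi> y * \<mu> y) has_sum T) UNIV"
    unfolding T_def by (rule has_sum_finite_neutralI[OF S]) (auto simp: supp)
  have green: "((\<lambda>y. w y * laplacian \<omega> \<mu> \<psi> y * \<mu> y) has_sum
      (\<Sum>x\<in>S. \<psi> x * laplacian \<omega> \<mu> w x * \<mu> x)) UNIV"
    unfolding w_def[abs_def] by (rule green_formula_finite_support[OF wg dom S supp])
  have "p * c0 * T = (\<Sum>x\<in>S. \<psi> x * (p * c0 * w x) * \<mu> x)"
    unfolding T_def by (simp add: sum_distrib_left mult_ac)
  also have "\<dots> \<le> (\<Sum>x\<in>S. \<psi> x * laplacian \<omega> \<mu> w x * \<mu> x)"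
    using kato \<psi>_nonneg \<mu> by (intro sum_mono mult_right_mono mult_left_mono) (auto intro: less_imp_le)
  also have "\<dots> \<le> b * T + (\<Sum>\<^sub>\<infinity>y. w y * g y * \<mu> y)"
  proof (rule has_sum_mono[OF green])
    show "((\<lambda>y. b * (w y * \<psi> y * \<mu> y) + w y * g y * \<mu> y) has_sum (b * T + (\<Sum>\<^sub>\<infinity>y. w y * g y * \<mu> y))) UNIV"
      using g_sum unfolding w_def[symmetric] by (intro has_sum_add has_sum_cmult_right T_sum) auto
    show "w y * laplacian \<omega> \<mu> \<psi> y * \<mu> y \<le> b * (w y * \<psi> y * \<mu> y) + w y * g y * \<mu> y" for y
      using mult_right_mono[OF mult_left_mono[OF lap_\<psi>[of y]], of "w y" "\<mu> y"] \<mu>[of y]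
      unfolding w_def by (simp add: algebra_simps)
  qed
  finally show ?thesis
    unfolding T_def w_def by (simp add: algebra_simps)
qed

definition cutoff :: "('a \<Rightarrow> 'a \<Rightarrow> real) \<Rightarrow> 'a \<Rightarrow> real \<Rightarrow> 'a \<Rightarrow> real" where
  "cutoff d x0 R x = max 0 (min 1 ((2 * R - d x x0) / R))"

lemma cutoff_nonneg: "0 \<le> cutoff d x0 R x"
  and cutoff_le_1: "cutoff d x0 R x \<le> 1"
  unfolding cutoff_def by auto

lemma cutoff_eq_1: "0 < R \<Longrightarrow> d x x0 \<le> R \<Longrightarrow> cutoff d x0 R x = 1"
  unfolding cutoff_def by (simp add: field_simps)

lemma cutoff_eq_0: "0 < R \<Longrightarrow> 2 * R \<le> d x x0 \<Longrightarrow> cutoff d x0 R x = 0"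
  unfolding cutoff_def by (simp add: divide_nonpos_pos)

lemma cutoff_le_add_dist:
  assumes "pseudo_metric d" and "0 < R"
  shows "cutoff d x0 R x \<le> cutoff d x0 R y + d y x / R"
proof -
  have "(2 * R - d x x0) / R \<le> (2 * R - d y x0) / R + d y x / R"
    using pseudo_metricD(3)[OF assms(1), of y x0 x] assms(2)
    by (simp add: divide_right_mono add_divide_distrib[symmetric])
  moreover have "0 \<le> d y x / R"
    using pseudo_metricD(1)[OF assms(1)] assms(2) by simp
  ultimately show ?thesis
    unfolding cutoff_def by (auto simp: max_def min_def)
qed

lemma exp_dist_le_mult_increment:
  assumes "pseudo_metric d" and "0 \<le> \<alpha>" and "d y x \<le> s"
  shows "exp (- \<alpha> * d x x0) \<le> exp (- \<alpha> * d y x0) * (1 + \<alpha> * exp (s * \<alpha>) * d y x)"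
proof -
  have "- \<alpha> * d x x0 \<le> - \<alpha> * d y x0 + \<alpha> * d y x"
    using mult_left_mono[OF pseudo_metricD(3)[OF assms(1), of y x0 x] assms(2)]
    by (simp add: algebra_simps)
  then have "exp (- \<alpha> * d x x0) \<le> exp (- \<alpha> * d y x0) * exp (\<alpha> * d y x)"
    by (simp flip: exp_add)
  also have "exp (\<alpha> * d y x) \<le> 1 + \<alpha> * exp (s * \<alpha>) * d y x"
  proof -
    have "exp (\<alpha> * d y x) \<le> 1 + \<alpha> * d y x * exp (\<alpha> * d y x)"
      by (rule exp_le_1_plus_mult_exp)
    also have "\<dots> \<le> 1 + \<alpha> * d y x * exp (s * \<alpha>)"
      using assms pseudo_metricD(1)[OF assms(1), of y x]
      by (intro add_left_mono mult_left_mono) (auto simp: mult.commute mult_left_mono)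
    finally show ?thesis by (simp add: mult_ac)
  qed
  finally show ?thesis by (simp add: mult_left_mono)
qed

lemma exp_cutoff_increment_le:
  fixes d :: "'a \<Rightarrow> 'a \<Rightarrow> real" and x0 :: 'a and \<alpha> s R :: real
  assumes pm: "pseudo_metric d" and "0 \<le> \<alpha>" and "0 < R" and "d y x \<le> s"
  defines "\<phi> z \<equiv> exp (- \<alpha> * d z x0)" and "a \<equiv> \<alpha> * exp (s * \<alpha>)"
  shows "\<phi> x * cutoff d x0 R x - \<phi> y * cutoff d x0 R y
    \<le> (a * (\<phi> y * cutoff d x0 R y) + \<phi> y / R) * d y x + (a * \<phi> y / R) * (d y x)\<^sup>2"
proof -
  have "0 \<le> a" and "0 \<le> d y x"
    using assms(2) pseudo_metricD(1)[OF pm] unfolding a_def by auto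
  have "\<phi> x * cutoff d x0 R x \<le> (\<phi> y * (1 + a * d y x)) * (cutoff d x0 R y + d y x / R)"
    using exp_dist_le_mult_increment[OF pm assms(2,4)] cutoff_le_add_dist[OF pm assms(3)]
      cutoff_nonneg \<open>0 \<le> a\<close> \<open>0 \<le> d y x\<close>
    unfolding \<phi>_def a_def by (intro mult_mono) auto
  also have "\<dots> = \<phi> y * cutoff d x0 R y
      + (a * (\<phi> y * cutoff d x0 R y) + \<phi> y / R) * d y x + (a * \<phi> y / R) * (d y x)\<^sup>2"
    using assms(3) by (simp add: field_simps power2_eq_square)
  finally show ?thesis by simp
qed

lemma laplacian_exp_cutoff_le:
  assumes wg: "weighted_graph \<omega> \<mu>" and pm: "pseudo_metric d" and intr: "intrinsic \<omega> \<mu> d"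
    and intr1: "q_intrinsic \<omega> \<mu> d 1 C0" and jump: "\<And>x y. 0 < \<omega> x y \<Longrightarrow> d x y \<le> s"
    and "0 \<le> \<alpha>" and "0 < R"
  shows "laplacian \<omega> \<mu> (\<lambda>x. exp (- \<alpha> * d x x0) * cutoff d x0 R x) y
    \<le> \<alpha> * exp (s * \<alpha>) * C0 * (exp (- \<alpha> * d y x0) * cutoff d x0 R y)
      + (C0 + \<alpha> * exp (s * \<alpha>)) / R * exp (- \<alpha> * d y x0)"
proof -
  define a where "a = \<alpha> * exp (s * \<alpha>)"
  define \<phi> where "\<phi> z = exp (- \<alpha> * d z x0)" for z
  define \<psi> where "\<psi> z = \<phi> z * cutoff d x0 R z" for z
  define c1 where "c1 = a * \<psi> y + \<phi> y / R"
  define c2 where "c2 = a * \<phi> y / R"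
  have "0 \<le> a" "0 \<le> c1" "0 \<le> c2"
    using assms(6,7) cutoff_nonneg[of d x0 R y] unfolding a_def c1_def c2_def \<psi>_def \<phi>_def by auto
  have \<psi>_bounds: "0 \<le> \<psi> x" "\<psi> x \<le> 1" for x
    using cutoff_nonneg[of d x0 R x] cutoff_le_1[of d x0 R x] pseudo_metricD(1)[OF pm, of x x0] assms(6)
    unfolding \<psi>_def \<phi>_def by (auto intro: mult_le_one)
  have "in_lap_domain \<omega> \<psi>"
    using \<psi>_bounds by (rule in_lap_domain_if_bounded[OF wg])
  then have "((\<lambda>x. (\<psi> x - \<psi> y) * \<omega> y x) has_sum laplacian \<omega> \<mu> \<psi> y * \<mu> y) UNIV"
    using weighted_graphD(1)[OF wg, of y] unfolding in_lap_domain_def laplacian_def by simp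
  moreover have "((\<lambda>x. c1 * (\<omega> y x * d y x) + c2 * (\<omega> y x * (d y x)\<^sup>2)) has_sum
      c1 * (\<Sum>\<^sub>\<infinity>x. \<omega> y x * d y x) + c2 * (\<Sum>\<^sub>\<infinity>x. \<omega> y x * (d y x)\<^sup>2)) UNIV"
    using q_intrinsic_1D(1)[OF intr1 pm wg] intrinsicD(1)[OF intr pm wg]
    by (intro has_sum_add has_sum_cmult_right has_sum_infsum)
  moreover have "(\<psi> x - \<psi> y) * \<omega> y x \<le> c1 * (\<omega> y x * d y x) + c2 * (\<omega> y x * (d y x)\<^sup>2)" for x
  proof (cases "0 < \<omega> y x")
    case True
    show ?thesis
      using mult_right_mono[OF exp_cutoff_increment_le[OF pm assms(6,7) jump[OF True]]
          weighted_graphD(2)[OF wg, of y x]]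
      unfolding \<psi>_def \<phi>_def c1_def c2_def a_def by (simp add: algebra_simps)
  qed (use weighted_graphD(2)[OF wg, of y x] in simp)
  ultimately have "laplacian \<omega> \<mu> \<psi> y * \<mu> y
      \<le> c1 * (\<Sum>\<^sub>\<infinity>x. \<omega> y x * d y x) + c2 * (\<Sum>\<^sub>\<infinity>x. \<omega> y x * (d y x)\<^sup>2)"
    by (rule has_sum_mono)
  also have "\<dots> \<le> c1 * (C0 * \<mu> y) + c2 * \<mu> y"
    using q_intrinsic_1D(2)[OF intr1 pm wg] intrinsicD(2)[OF intr pm wg] \<open>0 \<le> c1\<close> \<open>0 \<le> c2\<close>
    by (intro add_mono mult_left_mono)
  also have "\<dots> = (a * C0 * \<psi> y + (C0 + a) / R * \<phi> y) * \<mu> y"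
    unfolding c1_def c2_def by (simp add: algebra_simps add_divide_distrib)
  finally show ?thesis
    using weighted_graphD(1)[OF wg, of y] unfolding \<psi>_def \<phi>_def a_def by simp
qed

lemma in_lap_domain_if_weighted_summable:
  fixes f :: "'a \<Rightarrow> real"
  assumes wg: "weighted_graph \<omega> \<mu>" and pm: "pseudo_metric d" and intr: "intrinsic \<omega> \<mu> d"
    and balls: "finite_balls d" and jump: "\<And>x y. 0 < \<omega> x y \<Longrightarrow> d x y \<le> s"
    and "0 \<le> \<alpha>" and f_nonneg: "\<And>x. 0 \<le> f x"
    and f_sum: "(\<lambda>x. f x * exp (- \<alpha> * d x x0) * \<mu> x) summable_on UNIV"
  shows "in_lap_domain \<omega> f"
  unfolding in_lap_domain_iff[OF wg]
proof
  fix x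
  txt \<open>Off the unit ball around \<open>x\<close> the intrinsic bound gives \<open>\<omega> x y \<le> \<mu> y\<close>, and neighbours
    of \<open>x\<close> lie within \<open>s\<close> of it, so there the weight \<open>e^(-\<alpha> d(y,x0))\<close> is bounded below.\<close>
  define B where "B = {y. d y x < 1}"
  define K where "K = exp (\<alpha> * (d x x0 + s))"
  have "(\<lambda>y. f y * \<omega> x y) summable_on (UNIV - B)"
  proof (rule summable_on_comparison_test)
    show "(\<lambda>y. K * (f y * exp (- \<alpha> * d y x0) * \<mu> y)) summable_on (UNIV - B)"
      using summable_on_cmult_right[OF f_sum] by (rule summable_on_subset) simp
    show "0 \<le> f y * \<omega> x y" for y
      using f_nonneg weighted_graphD(2)[OF wg] by simp
    show "f y * \<omega> x y \<le> K * (f y * exp (- \<alpha> * d y x0) * \<mu> y)" if "y \<in> UNIV - B" for y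
    proof (cases "0 < \<omega> x y")
      case True
      have "\<omega> x y \<le> \<mu> y"
        using weight_le_measure_if_far[OF wg pm intr, of y x] that weighted_graphD(3)[OF wg, of x y]
        unfolding B_def by simp
      moreover have "1 \<le> K * exp (- \<alpha> * d y x0)"
      proof -
        have "d y x0 \<le> d x x0 + s"
          using pseudo_metricD(3)[OF pm, of y x0 x] pseudo_metricD(2)[OF pm, of x y] jump[OF True]
          by simp
        then have "\<alpha> * d y x0 \<le> \<alpha> * (d x x0 + s)"
          using \<open>0 \<le> \<alpha>\<close> by (rule mult_left_mono)
        then show ?thesis
          unfolding K_def by (simp flip: exp_add)
      qed
      ultimately have "\<omega> x y \<le> K * exp (- \<alpha> * d y x0) * \<mu> y"
        using weighted_graphD(1)[OF wg, of y] by (smt (verit) mult_le_cancel_right1)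
      from mult_left_mono[OF this f_nonneg[of y]] show ?thesis by (simp add: mult_ac)
    next
      case False
      then have "\<omega> x y = 0"
        using weighted_graphD(2)[OF wg, of x y] by simp
      then show ?thesis
        using f_nonneg[of y] weighted_graphD(1)[OF wg, of y] unfolding K_def by (simp add: less_imp_le)
    qed
  qed
  moreover have "finite B"
    using balls unfolding finite_balls_def B_def by blast
  ultimately have "(\<lambda>y. f y * \<omega> x y) summable_on ((UNIV - B) \<union> B)"
    by (intro summable_on_union) auto
  then show "(\<lambda>y. f y * \<omega> x y) summable_on UNIV" by simp
qed

lemma cutoff_energy_decay:
  fixes u V :: "'a \<Rightarrow> real"
  assumes wg: "weighted_graph \<omega> \<mu>" and pm: "pseudo_metric d" and intr: "intrinsic \<omega> \<mu> d"
    and intr1: "q_intrinsic \<omega> \<mu> d 1 C0" and balls: "finite_balls d"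
    and jump: "\<And>x y. 0 < \<omega> x y \<Longrightarrow> d x y \<le> s"
    and sol: "schroedinger_solution \<omega> \<mu> V u" and V: "\<And>x. c0 \<le> V x" and p: "p \<ge> 1"
    and "0 \<le> \<alpha>" and u_sum: "(\<lambda>x. \<bar>u x\<bar> powr p * exp (- \<alpha> * d x x0) * \<mu> x) summable_on UNIV"
    and "0 < R"
  shows "(p * c0 - C0 * (\<alpha> * exp (s * \<alpha>)))
      * (\<Sum>x\<in>{y. d y x0 < 2 * R}. \<bar>u x\<bar> powr p * (exp (- \<alpha> * d x x0) * cutoff d x0 R x) * \<mu> x)
    \<le> (C0 + \<alpha> * exp (s * \<alpha>)) * (\<Sum>\<^sub>\<infinity>x. \<bar>u x\<bar> powr p * exp (- \<alpha> * d x x0) * \<mu> x) / R"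
proof -
  define a where "a = \<alpha> * exp (s * \<alpha>)"
  define \<phi> where "\<phi> x = exp (- \<alpha> * d x x0)" for x
  have dom: "in_lap_domain \<omega> (\<lambda>x. \<bar>u x\<bar> powr p)"
    using u_sum \<open>0 \<le> \<alpha>\<close> by (intro in_lap_domain_if_weighted_summable[OF wg pm intr balls jump]) auto
  have "(p * c0 - C0 * a) * (\<Sum>x\<in>{y. d y x0 < 2 * R}. \<bar>u x\<bar> powr p * (\<phi> x * cutoff d x0 R x) * \<mu> x)
      \<le> (\<Sum>\<^sub>\<infinity>y. \<bar>u y\<bar> powr p * ((C0 + a) / R * \<phi> y) * \<mu> y)"
  proof (rule energy_estimate_finite_support[OF wg sol V p dom])
    show "finite {y. d y x0 < 2 * R}"
      using balls unfolding finite_balls_def by blast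
    show "\<phi> x * cutoff d x0 R x = 0" if "x \<notin> {y. d y x0 < 2 * R}" for x
      using cutoff_eq_0[OF \<open>0 < R\<close>, of d x x0] that by simp
    show "0 \<le> \<phi> x * cutoff d x0 R x" for x
      unfolding \<phi>_def by (simp add: cutoff_nonneg)
    show "laplacian \<omega> \<mu> (\<lambda>x. \<phi> x * cutoff d x0 R x) y
        \<le> C0 * a * (\<phi> y * cutoff d x0 R y) + (C0 + a) / R * \<phi> y" for y
      using laplacian_exp_cutoff_le[OF wg pm intr intr1 jump \<open>0 \<le> \<alpha>\<close> \<open>0 < R\<close>, of x0 y]
      unfolding \<phi>_def[abs_def] a_def by (simp add: mult_ac)
    show "(\<lambda>y. \<bar>u y\<bar> powr p * ((C0 + a) / R * \<phi> y) * \<mu> y) summable_on UNIV"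
      using summable_on_cmult_right[OF u_sum, of "(C0 + a) / R"] unfolding \<phi>_def by (simp add: mult_ac)
  qed
  also have "\<dots> = (C0 + a) / R * (\<Sum>\<^sub>\<infinity>x. \<bar>u x\<bar> powr p * \<phi> x * \<mu> x)"
    unfolding infsum_cmult_right'[symmetric] by (simp add: mult_ac)
  finally show ?thesis
    unfolding a_def \<phi>_def by simp
qed

lemma eq_0_if_cutoff_energy_decay:
  fixes u :: "'a \<Rightarrow> real"
  assumes wg: "weighted_graph \<omega> \<mu>" and balls: "finite_balls d" and "0 < e"
    and decay: "\<And>R. 0 < R \<Longrightarrow>
      e * (\<Sum>x\<in>{y. d y x0 < 2 * R}. \<bar>u x\<bar> powr p * (exp (- \<alpha> * d x x0) * cutoff d x0 R x) * \<mu> x) \<le> K / R"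
  shows "u z = 0"
proof (rule ccontr)
  assume "u z \<noteq> 0"
  define q where "q = \<bar>u z\<bar> powr p * exp (- \<alpha> * d z x0) * \<mu> z"
  have "0 < q"
    using \<open>u z \<noteq> 0\<close> weighted_graphD(1)[OF wg, of z] unfolding q_def by simp
  have "eventually (\<lambda>R. e * q \<le> K / R) at_top"
    using eventually_ge_at_top[of "max 1 (d z x0)"]
  proof eventually_elim
    case (elim R)
    then have "0 < R" and "d z x0 \<le> R" by auto
    have "q = \<bar>u z\<bar> powr p * (exp (- \<alpha> * d z x0) * cutoff d x0 R z) * \<mu> z"
      using cutoff_eq_1[of R d z x0] \<open>0 < R\<close> \<open>d z x0 \<le> R\<close> unfolding q_def by simp
    also have "\<dots> \<le> (\<Sum>x\<in>{y. d y x0 < 2 * R}. \<bar>u x\<bar> powr p * (exp (- \<alpha> * d x x0) * cutoff d x0 R x) * \<mu> x)"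
      using \<open>0 < R\<close> \<open>d z x0 \<le> R\<close> balls weighted_graphD(1)[OF wg]
      by (intro member_le_sum) (auto simp: finite_balls_def cutoff_nonneg less_imp_le)
    finally show ?case
      using decay[OF \<open>0 < R\<close>] \<open>0 < e\<close> by (smt (verit) mult_left_mono)
  qed
  then have "e * q \<le> 0"
    by (rule nonpos_if_eventually_le_div)
  moreover have "0 < e * q"
    using \<open>0 < e\<close> \<open>0 < q\<close> by (rule mult_pos_pos)
  ultimately show False by simp
qed

theorem theorem3p3:
  fixes \<omega> :: "'a::countable \<Rightarrow> 'a \<Rightarrow> real" and \<mu> :: "'a \<Rightarrow> real"
    and d :: "'a \<Rightarrow> 'a \<Rightarrow> real" and V u :: "'a \<Rightarrow> real"
    and C0 p \<alpha> :: real and x0 :: 'a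
  assumes "weighted_graph \<omega> \<mu>"
    and "infinite (UNIV :: 'a set)"
    and "graph_connected \<omega>"
    and "pseudo_metric d"
    and "intrinsic \<omega> \<mu> d"
    and "C0 > 0" and "q_intrinsic \<omega> \<mu> d 1 C0"
    and "bdd_above (jump_set \<omega> d)"
    and "finite_balls d"
    and "bdd_below (range V)" and "(INF x. V x) > 0"
    and "schroedinger_solution \<omega> \<mu> V u"
    and "p \<ge> 1" and "\<alpha> > 0"
    and "C0 * \<alpha> * exp (jump_size \<omega> d * \<alpha>) < (INF x. V x) * p"
    and "u \<in> weighted_lp p (\<lambda>x. exp (- \<alpha> * d x x0)) \<mu>"
  shows "\<forall>x. u x = 0"
proof -
  define c0 where "c0 = (INF x. V x)"
  define s where "s = jump_size \<omega> d"
  have jump: "\<And>x y. 0 < \<omega> x y \<Longrightarrow> d x y \<le> s"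
    using jump_size_ge[OF assms(8)] unfolding s_def by blast
  have V: "c0 \<le> V x" for x
    unfolding c0_def using assms(10) by (rule cINF_lower) simp
  have u_sum: "(\<lambda>x. \<bar>u x\<bar> powr p * exp (- \<alpha> * d x x0) * \<mu> x) summable_on UNIV"
    using assms(16) unfolding weighted_lp_def by simp
  have "0 < p * c0 - C0 * (\<alpha> * exp (s * \<alpha>))"
    using assms(15) unfolding c0_def s_def by (simp add: mult_ac)
  show ?thesis
  proof
    fix z
    show "u z = 0"
      using eq_0_if_cutoff_energy_decay[OF assms(1,9) \<open>0 < p * c0 - C0 * (\<alpha> * exp (s * \<alpha>))\<close>
          cutoff_energy_decay[OF assms(1,4,5,7,9) jump assms(12) V assms(13) _ u_sum]] assms(14)
      by simp
  qed
qed

end
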